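(* Let $n\ge2$ and $u\in\mathfrak D_n$. If either ($u(1)=1$ and $u(k)>0$ for all $1\le k\le n$) or ($u(1)<-1$, $u^{-1}(1)<-1$, and $|\{1\le i\le n: u(i)<0\}|=2$), then $$C(u)=\{t_1\}\cup\{t_i: i\ne1,\ |u(j)|<u(k)\text{ for all }0\le j\le i<k\le n\};$$ otherwise $$C(u)=\{t_i: i\ne1,\ |u(j)|<u(k)\text{ for all }0\le j\le i<k\le n\},$$ where $u(0)=0$ by convention and $i$ ranges over $\{0,1,\dots,n-1\}$.
   Context: $\mathfrak B_n$ is the group of signed permutations of $\{\pm1,\dots,\pm n\}$ ($w(-i)=-w(i)$), with $\tau_0=(-1,1)$ and $\tau_i=(i,i+1)(-i,-i-1)$ for $1\le i\le n-1$. For $n\ge2$, $\mathfrak D_n$ is the subgroup of $\mathfrak B_n$ (of order $2^{n-1}n!$) generated by $t_0=\tau_0\tau_1\tau_0$ (so $t_0(1)=-2$, $t_0(2)=-1$) and $t_i=\tau_i$ for $1\le i\le n-1$; it is a Coxeter group with generators $S=\{t_0,\dots,t_{n-1}\}$. For $w\in\mathfrak D_n$, $S(w)$ is the set of generators appearing in a (any) reduced expression of $w$ in $\mathfrak D_n$, and $C(w)=S\setminus S(w)$. *)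

theory Defs
  imports Main
begin

text \<open>Signed permutations are represented as functions int => int
  (fixing 0 and everything outside [-n,n]); the group product is function
  composition, (v w)(x) = v (w x).\<close>

definition tau0 :: "int \<Rightarrow> int" where
  "tau0 x = (if x = 1 then -1 else if x = -1 then 1 else x)"

definition tau :: "nat \<Rightarrow> int \<Rightarrow> int" where
  "tau i x = (if x = int i then int i + 1 else if x = int i + 1 then int i
              else if x = - int i then - int i - 1 else if x = - int i - 1 then - int i else x)"

definition tgen :: "nat \<Rightarrow> int \<Rightarrow> int" where
  "tgen i = (if i = 0 then tau0 \<circ> tau 1 \<circ> tau0 else tau i)"

definition word_prod :: "nat list \<Rightarrow> int \<Rightarrow> int" where
  "word_prod ws = foldr (\<lambda>i f. tgen i \<circ> f) ws id"

definition words :: "nat \<Rightarrow> nat list set" where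
  "words n = {ws. set ws \<subseteq> {0..<n}}"

text \<open>D_n: the subgroup generated by t_0,...,t_{n-1}; as the generators are
  involutions, this is the set of all products of generators.\<close>
definition Dn :: "nat \<Rightarrow> (int \<Rightarrow> int) set" where
  "Dn n = word_prod ` words n"

definition Gens :: "nat \<Rightarrow> (int \<Rightarrow> int) set" where
  "Gens n = tgen ` {0..<n}"

definition lenD :: "nat \<Rightarrow> (int \<Rightarrow> int) \<Rightarrow> nat" where
  "lenD n w = (LEAST l. \<exists>ws \<in> words n. word_prod ws = w \<and> length ws = l)"

definition reduced_words :: "nat \<Rightarrow> (int \<Rightarrow> int) \<Rightarrow> nat list set" where
  "reduced_words n w = {ws \<in> words n. word_prod ws = w \<and> length ws = lenD n w}"

definition supp :: "nat \<Rightarrow> (int \<Rightarrow> int) \<Rightarrow> (int \<Rightarrow> int) set" where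
  "supp n w = {tgen i | i. \<exists>ws \<in> reduced_words n w. i \<in> set ws}"

definition cosupp :: "nat \<Rightarrow> (int \<Rightarrow> int) \<Rightarrow> (int \<Rightarrow> int) set" where
  "cosupp n w = Gens n - supp n w"

end

theory Submission
  imports Defs
begin

text \<open>
  Elements of \<open>D\<^sub>n\<close> are signed permutations with an even number of negative entries.
  Right multiplication by \<open>t\<^sub>m\<close> toggles the two root pairs of its simple root and permutes
  all other root pairs, so the length of \<open>w\<close> is half the number of root pairs that \<open>w\<close>
  inverts.

  For each generator \<open>t\<^sub>i\<close>, the orbits on \<open>\<plusminus>1, \<dots>, \<plusminus>n\<close> of the subgroup generated by
  the other generators are blocks that every \<open>t\<^sub>m\<close> with \<open>m \<noteq> i\<close> preserves. Hence such
  letters neither create nor destroy an inversion of a pair meeting two blocks, while the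
  last \<open>t\<^sub>i\<close> in a reduced word must create one. So \<open>t\<^sub>i \<notin> S(w)\<close> iff \<open>w\<close> inverts no
  pair meeting two blocks of \<open>t\<^sub>i\<close>; for \<open>i = 0\<close> and \<open>i \<ge> 2\<close> this says that \<open>\<bar>w\<bar>\<close> is
  smaller on \<open>{1..i}\<close> than the positive values on \<open>{i+1..n}\<close>, and for \<open>i = 1\<close> it says that
  \<open>w\<close> equals \<open>-1\<close> at one point of the block \<open>{-1, 2, \<dots>, n}\<close> and is at least \<open>2\<close> on the
  rest of it, the two possible positions of that point giving the two exceptional cases.
\<close>

lemma int_strict_mono_bound:
  fixes f :: "int \<Rightarrow> int"
  assumes step: "\<And>k. a \<le> k \<Longrightarrow> k < b \<Longrightarrow> f k < f (k + 1)" and "a \<le> k" "k \<le> b"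
  shows "f a + (k - a) \<le> f k"
  using assms(2,3)
proof (induction k rule: int_ge_induct)
  case (step k)
  then show ?case
    using assms(1)[of k] by simp
qed simp

section \<open>Generators and words\<close>

lemma tgen_0_apply:
  "tgen 0 x = (if x = 1 then -2 else if x = 2 then -1 else if x = -1 then 2 else if x = -2 then 1 else x)"
  by (auto simp: tgen_def tau0_def tau_def)

lemma tgen_apply:
  "m \<noteq> 0 \<Longrightarrow> tgen m x = (if x = int m then int m + 1 else if x = int m + 1 then int m
     else if x = - int m then - int m - 1 else if x = - int m - 1 then - int m else x)"
  by (auto simp: tgen_def tau_def)

lemma tgen_tgen [simp]: "tgen m (tgen m x) = x"
  by (cases "m = 0") (auto simp: tgen_0_apply tgen_apply)

lemma tgen_comp_tgen: "tgen m \<circ> tgen m = id"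
  by auto

lemma bij_tgen: "bij (tgen m)"
  by (rule o_bij[OF tgen_comp_tgen tgen_comp_tgen])

lemma tgen_uminus: "tgen m (- x) = - tgen m x"
  by (cases "m = 0") (auto simp: tgen_0_apply tgen_apply)

lemma tgen_eq_0_iff [simp]: "tgen m x = 0 \<longleftrightarrow> x = 0"
  by (cases "m = 0") (auto simp: tgen_0_apply tgen_apply)

lemma abs_tgen_le: "2 \<le> n \<Longrightarrow> m < n \<Longrightarrow> \<bar>x\<bar> \<le> int n \<Longrightarrow> \<bar>tgen m x\<bar> \<le> int n"
  by (cases "m = 0") (auto simp: tgen_0_apply tgen_apply)

lemma tgen_outside: "2 \<le> n \<Longrightarrow> m < n \<Longrightarrow> int n < \<bar>x\<bar> \<Longrightarrow> tgen m x = x"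
  by (cases "m = 0") (auto simp: tgen_0_apply tgen_apply)

lemma inj_tgen: "inj tgen"
proof (rule injI)
  fix i j assume eq: "tgen i = tgen j"
  show "i = j"
  proof (cases "i = 0 \<or> j = 0")
    case True
    then show ?thesis
      using fun_cong[OF eq, of 1]
      by (cases "i = 0"; cases "j = 0") (auto simp: tgen_0_apply tgen_apply split: if_splits)
  next
    case False
    then show ?thesis
      using fun_cong[OF eq, of "int i"] by (auto simp: tgen_apply split: if_splits)
  qed
qed

lemma word_prod_Nil [simp]: "word_prod [] = id"
  by (simp add: word_prod_def)

lemma word_prod_Cons: "word_prod (m # ws) = tgen m \<circ> word_prod ws"
  by (simp add: word_prod_def)

lemma word_prod_append: "word_prod (ws @ vs) = word_prod ws \<circ> word_prod vs"
  by (induction ws) (simp_all add: word_prod_Cons comp_assoc)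

lemma word_prod_snoc: "word_prod (ws @ [m]) = word_prod ws \<circ> tgen m"
  by (simp add: word_prod_append word_prod_Cons)

lemma append_in_words_iff [simp]: "ws @ vs \<in> words n \<longleftrightarrow> ws \<in> words n \<and> vs \<in> words n"
  by (auto simp: words_def)

lemma Cons_in_words_iff [simp]: "m # ws \<in> words n \<longleftrightarrow> m < n \<and> ws \<in> words n"
  by (auto simp: words_def)

lemma Nil_in_words [simp]: "[] \<in> words n"
  by (simp add: words_def)

lemma comp_tgen_in_Dn: "w \<in> Dn n \<Longrightarrow> m < n \<Longrightarrow> w \<circ> tgen m \<in> Dn n"
  unfolding Dn_def by (auto simp: word_prod_snoc intro!: image_eqI[of _ _ "_ @ [m]"])

section \<open>Even signed permutations\<close>

definition sign_prod :: "nat \<Rightarrow> (int \<Rightarrow> int) \<Rightarrow> int" where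
  "sign_prod n w = (\<Prod>k\<in>{1..int n}. sgn (w k))"

locale even_signed_perm =
  fixes n :: nat and w :: "int \<Rightarrow> int"
  assumes uminus: "w (- x) = - w x"
    and bij: "bij w"
    and outside: "int n < \<bar>x\<bar> \<Longrightarrow> w x = x"
    and abs_le: "\<bar>x\<bar> \<le> int n \<Longrightarrow> \<bar>w x\<bar> \<le> int n"
    and sign_prod_eq_1: "sign_prod n w = 1"
begin

lemma inj: "inj w"
  using bij by (rule bij_is_inj)

lemma apply_eq_iff [simp]: "w x = w y \<longleftrightarrow> x = y"
  using inj by (auto dest: injD)

lemma apply_eq_0_iff [simp]: "w x = 0 \<longleftrightarrow> x = 0"
  using uminus[of 0] apply_eq_iff[of x 0] by simp

lemma not_one_negative:
  assumes "1 \<le> k" "k \<le> int n" "w k < 0" and pos: "\<And>l. 1 \<le> l \<Longrightarrow> l \<le> int n \<Longrightarrow> l \<noteq> k \<Longrightarrow> 0 < w l"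
  shows False
proof -
  have "sign_prod n w = sgn (w k) * (\<Prod>l\<in>{1..int n} - {k}. sgn (w l))"
    unfolding sign_prod_def using assms(1,2) by (subst prod.remove[of _ k]) auto
  also have "(\<Prod>l\<in>{1..int n} - {k}. sgn (w l)) = 1"
    by (rule prod.neutral) (use pos in auto)
  finally show False
    using assms(3) sign_prod_eq_1 by simp
qed

lemma obtain_preimage:
  assumes "0 < \<bar>v\<bar>" "\<bar>v\<bar> \<le> int n"
  obtains z where "w z = v" "0 < \<bar>z\<bar>" "\<bar>z\<bar> \<le> int n"
proof -
  obtain z where z: "w z = v"
    using surjD[OF bij_is_surj[OF bij], of v] by metis
  moreover from this have "\<bar>z\<bar> \<le> int n"
    using assms(2) outside[of z] by force
  ultimately show ?thesis
    using that assms(1) by force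
qed

lemma eq_id_if_fixes_positive:
  assumes "\<And>k. 1 \<le> k \<Longrightarrow> k \<le> int n \<Longrightarrow> w k = k"
  shows "w = id"
proof
  fix x
  consider "x = 0" | "1 \<le> \<bar>x\<bar>" "\<bar>x\<bar> \<le> int n" | "int n < \<bar>x\<bar>"
    by linarith
  then show "w x = id x"
  proof cases
    case 2
    then show ?thesis
      using assms[of "\<bar>x\<bar>"] uminus[of x] by (cases "0 \<le> x") simp_all
  qed (simp_all add: outside)
qed

end

lemma sign_prod_comp_tgen:
  assumes "2 \<le> n" "m < n" and odd: "\<And>x. w (- x) = - w x"
  shows "sign_prod n (w \<circ> tgen m) = sign_prod n w"
proof (cases "m = 0")
  case True
  have interval_split: "{1..int n} = insert 1 (insert 2 {3..int n})"
    using assms(1) by auto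
  have "(\<Prod>k\<in>{3..int n}. sgn (w (tgen 0 k))) = (\<Prod>k\<in>{3..int n}. sgn (w k))"
    by (rule prod.cong) (auto simp: tgen_0_apply)
  then show ?thesis
    using True odd[of 1] odd[of 2] by (simp add: sign_prod_def interval_split tgen_0_apply)
next
  case False
  have "bij_betw (tgen m) {1..int n} {1..int n}"
    by (rule bij_betw_byWitness[where f' = "tgen m"]) (use False assms in \<open>auto simp: tgen_apply\<close>)
  then show ?thesis
    unfolding sign_prod_def using prod.reindex_bij_betw[of "tgen m", of _ _ "\<lambda>k. sgn (w k)"] by simp
qed

lemma even_signed_perm_id: "even_signed_perm n id"
  by unfold_locales (auto simp: sign_prod_def)

lemma even_signed_perm_comp_tgen:
  assumes "2 \<le> n" "m < n" "even_signed_perm n w"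
  shows "even_signed_perm n (w \<circ> tgen m)"
proof -
  interpret even_signed_perm n w by fact
  show ?thesis
    by unfold_locales
      (use assms tgen_uminus uminus abs_le tgen_outside outside abs_tgen_le
        in \<open>auto simp: sign_prod_comp_tgen sign_prod_eq_1 bij_comp[OF bij_tgen bij]\<close>)
qed

lemma even_signed_perm_comp_word_prod:
  assumes "2 \<le> n" "ws \<in> words n" "even_signed_perm n w"
  shows "even_signed_perm n (w \<circ> word_prod ws)"
  using assms(2)
proof (induction ws rule: rev_induct)
  case (snoc m ws)
  then show ?case
    using even_signed_perm_comp_tgen[OF assms(1), of m "w \<circ> word_prod ws"]
    by (simp add: word_prod_snoc comp_def)
qed (simp add: assms(3))

lemma even_signed_perm_word_prod: "2 \<le> n \<Longrightarrow> ws \<in> words n \<Longrightarrow> even_signed_perm n (word_prod ws)"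
  using even_signed_perm_comp_word_prod[OF _ _ even_signed_perm_id] by simp

lemma even_signed_perm_Dn: "2 \<le> n \<Longrightarrow> w \<in> Dn n \<Longrightarrow> even_signed_perm n w"
  by (auto simp: Dn_def even_signed_perm_word_prod)

section \<open>Inversions and length\<close>

text \<open>The positive root \<open>e\<^sub>x - e\<^sub>y\<close> (with \<open>e\<^sub>-\<^sub>x = - e\<^sub>x\<close>) is encoded by both pairs
  \<open>(x, y)\<close> and \<open>(-y, -x)\<close>, so every inversion is counted twice; \<open>simple_pairs m\<close> encodes
  the simple root of \<open>t\<^sub>m\<close>.\<close>

definition root_pairs :: "nat \<Rightarrow> (int \<times> int) set" where
  "root_pairs n = {(x, y). 0 < \<bar>x\<bar> \<and> \<bar>x\<bar> \<le> int n \<and> 0 < \<bar>y\<bar> \<and> \<bar>y\<bar> \<le> int n \<and> y < x \<and> x \<noteq> - y}"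

definition inversions :: "nat \<Rightarrow> (int \<Rightarrow> int) \<Rightarrow> (int \<times> int) set" where
  "inversions n w = {(x, y) \<in> root_pairs n. w x < w y}"

definition simple_pairs :: "nat \<Rightarrow> (int \<times> int) set" where
  "simple_pairs m =
     (if m = 0 then {(1, -2), (2, -1)} else {(int m + 1, int m), (- int m, - int m - 1)})"

definition tgen_pair :: "nat \<Rightarrow> int \<times> int \<Rightarrow> int \<times> int" where
  "tgen_pair m = map_prod (tgen m) (tgen m)"

lemma finite_inversions: "finite (inversions n w)"
proof (rule finite_subset)
  show "inversions n w \<subseteq> {- int n..int n} \<times> {- int n..int n}"
    by (auto simp: inversions_def root_pairs_def)
qed simp

lemma inversions_id [simp]: "inversions n id = {}"
  by (auto simp: inversions_def root_pairs_def)

lemma card_simple_pairs: "card (simple_pairs m) = 2"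
  by (simp add: simple_pairs_def)

lemma finite_simple_pairs [simp]: "finite (simple_pairs m)"
  by (simp add: simple_pairs_def)

lemma simple_pairs_subset_root_pairs: "2 \<le> n \<Longrightarrow> m < n \<Longrightarrow> simple_pairs m \<subseteq> root_pairs n"
  by (auto simp: simple_pairs_def root_pairs_def)

lemma tgen_swap_simple_pair:
  assumes "(x, y) \<in> simple_pairs m"
  shows "tgen m x = y \<and> tgen m y = x"
proof (cases "m = 0")
  case True
  with assms have "(x = 1 \<and> y = -2) \<or> (x = 2 \<and> y = -1)"
    by (simp add: simple_pairs_def)
  with True show ?thesis
    by (elim disjE) (simp_all add: tgen_0_apply)
next
  case False
  with assms have "(x = int m + 1 \<and> y = int m) \<or> (x = - int m \<and> y = - int m - 1)"
    by (simp add: simple_pairs_def)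
  with False show ?thesis
    by (elim disjE) (simp_all add: tgen_apply)
qed

lemma tgen_less_tgen:
  assumes "(x, y) \<in> root_pairs n" "(x, y) \<notin> simple_pairs m"
  shows "tgen m y < tgen m x"
proof (cases "m = 0")
  case True
  have "y < x" "x \<noteq> - y" "x \<noteq> 0" "y \<noteq> 0" "\<not> (x = 1 \<and> y = -2)" "\<not> (x = 2 \<and> y = -1)"
    using assms True by (auto simp: root_pairs_def simple_pairs_def)
  then show ?thesis
    unfolding True tgen_0_apply by (simp split: if_split) auto
next
  case False
  define k where "k = int m"
  have "1 \<le> k" "\<not> (x = k + 1 \<and> y = k)" "\<not> (x = - k \<and> y = - k - 1)"
    using assms(2) False by (auto simp: simple_pairs_def k_def)
  moreover have "y < x" "x \<noteq> - y"
    using assms(1) by (auto simp: root_pairs_def)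
  moreover have "x = k \<or> x = k + 1 \<or> x = - k \<or> x = - k - 1 \<or> x \<notin> {k, k + 1, - k, - k - 1}"
    "y = k \<or> y = k + 1 \<or> y = - k \<or> y = - k - 1 \<or> y \<notin> {k, k + 1, - k, - k - 1}"
    by auto
  ultimately show ?thesis
    unfolding tgen_apply[OF False] k_def[symmetric] by (elim disjE) simp_all
qed

lemma tgen_pair_tgen_pair [simp]: "tgen_pair m (tgen_pair m z) = z"
  by (cases z) (simp add: tgen_pair_def)

lemma tgen_pair_nonsimple_root_pair:
  assumes "2 \<le> n" "m < n" "z \<in> root_pairs n - simple_pairs m"
  shows "tgen_pair m z \<in> root_pairs n - simple_pairs m"
proof -
  obtain x y where z: "z = (x, y)"
    by (cases z)
  have "y < x" "x \<noteq> - y"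
    using assms(3) by (auto simp: z root_pairs_def)
  have less: "tgen m y < tgen m x"
    using assms(3) by (intro tgen_less_tgen) (auto simp: z)
  have "tgen m x \<noteq> - tgen m y"
    using \<open>x \<noteq> - y\<close> by (metis tgen_tgen tgen_uminus)
  then have "tgen_pair m z \<in> root_pairs n"
    using assms less abs_tgen_le[OF assms(1,2)] by (auto simp: z tgen_pair_def root_pairs_def)
  moreover have "(tgen m x, tgen m y) \<notin> simple_pairs m"
  proof
    assume "(tgen m x, tgen m y) \<in> simple_pairs m"
    then have "x = tgen m y"
      using tgen_swap_simple_pair by (metis tgen_tgen)
    then show False
      using less \<open>y < x\<close> by simp
  qed
  ultimately show ?thesis
    by (simp add: z tgen_pair_def)
qed

lemma nonsimple_pair_in_inversions_comp_tgen_iff: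
  assumes "2 \<le> n" "m < n" "z \<in> root_pairs n - simple_pairs m"
  shows "z \<in> inversions n (w \<circ> tgen m) \<longleftrightarrow> tgen_pair m z \<in> inversions n w"
  using tgen_pair_nonsimple_root_pair[OF assms] assms(3)
  by (cases z) (auto simp: inversions_def tgen_pair_def)

context even_signed_perm
begin

lemma simple_pairs_subset_or_disjoint:
  "simple_pairs m \<subseteq> inversions n w \<or> simple_pairs m \<inter> inversions n w = {}"
proof -
  obtain p q where pq: "simple_pairs m = {(p, q), (- q, - p)}"
  proof (cases "m = 0")
    case True
    then show ?thesis
      using that[of 1 "-2"] by (simp add: simple_pairs_def insert_commute)
  next
    case False
    then show ?thesis
      using that[of "int m + 1" "int m"] by (simp add: simple_pairs_def)
  qed
  have "(p, q) \<in> root_pairs n \<longleftrightarrow> (- q, - p) \<in> root_pairs n"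
    by (auto simp: root_pairs_def)
  moreover have "w p < w q \<longleftrightarrow> w (- q) < w (- p)"
    by (simp add: uminus)
  ultimately show ?thesis
    unfolding pq inversions_def by auto
qed

lemma simple_pair_in_inversions_comp_tgen_iff:
  assumes "2 \<le> n" "m < n" "z \<in> simple_pairs m"
  shows "z \<in> inversions n (w \<circ> tgen m) \<longleftrightarrow> z \<notin> inversions n w"
proof -
  obtain x y where z: "z = (x, y)"
    by (cases z)
  have root: "(x, y) \<in> root_pairs n"
    using assms simple_pairs_subset_root_pairs[OF assms(1,2)] by (auto simp: z)
  then have "w x \<noteq> w y"
    by (auto simp: root_pairs_def)
  moreover have "tgen m x = y" "tgen m y = x"
    using tgen_swap_simple_pair assms(3) by (auto simp: z)
  ultimately show ?thesis
    using root by (auto simp: z inversions_def simp del: apply_eq_iff)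
qed

lemma inversions_comp_tgen:
  assumes "2 \<le> n" "m < n"
  shows "inversions n (w \<circ> tgen m) =
           tgen_pair m ` (inversions n w - simple_pairs m) \<union> (simple_pairs m - inversions n w)"
proof (intro set_eqI iffI)
  note simple = simple_pair_in_inversions_comp_tgen_iff[OF assms]
  note nonsimple = nonsimple_pair_in_inversions_comp_tgen_iff[OF assms]
  fix z
  assume z: "z \<in> inversions n (w \<circ> tgen m)"
  show "z \<in> tgen_pair m ` (inversions n w - simple_pairs m) \<union> (simple_pairs m - inversions n w)"
  proof (cases "z \<in> simple_pairs m")
    case False
    then have "z \<in> root_pairs n - simple_pairs m"
      using z by (auto simp: inversions_def)
    then have "tgen_pair m z \<in> inversions n w - simple_pairs m"
      using z nonsimple tgen_pair_nonsimple_root_pair[OF assms] by blast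
    then show ?thesis
      by (metis UnI1 image_eqI tgen_pair_tgen_pair)
  qed (use z simple in blast)
next
  note simple = simple_pair_in_inversions_comp_tgen_iff[OF assms]
  note nonsimple = nonsimple_pair_in_inversions_comp_tgen_iff[OF assms]
  fix z
  assume "z \<in> tgen_pair m ` (inversions n w - simple_pairs m) \<union> (simple_pairs m - inversions n w)"
  then show "z \<in> inversions n (w \<circ> tgen m)"
  proof
    assume "z \<in> tgen_pair m ` (inversions n w - simple_pairs m)"
    then obtain z' where z': "z' \<in> inversions n w - simple_pairs m" "z = tgen_pair m z'"
      by blast
    then have "z' \<in> root_pairs n - simple_pairs m"
      by (auto simp: inversions_def)
    then show ?thesis
      using z' nonsimple tgen_pair_nonsimple_root_pair[OF assms] by simp
  qed (use simple in blast)
qed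

lemma card_inversions_comp_tgen:
  assumes "2 \<le> n" "m < n"
  shows "card (inversions n (w \<circ> tgen m)) =
           card (inversions n w - simple_pairs m) + card (simple_pairs m - inversions n w)"
proof -
  have "inj_on (tgen_pair m) A" for A
    by (rule inj_on_inverseI[of _ "tgen_pair m"]) simp
  moreover have "tgen_pair m ` (inversions n w - simple_pairs m) \<inter> (simple_pairs m - inversions n w) = {}"
    using tgen_pair_nonsimple_root_pair[OF assms] by (auto simp: inversions_def)
  ultimately show ?thesis
    unfolding inversions_comp_tgen[OF assms]
    by (simp add: card_Un_disjoint card_image finite_inversions)
qed

lemma card_inversions_comp_tgen_le:
  assumes "2 \<le> n" "m < n"
  shows "card (inversions n (w \<circ> tgen m)) \<le> card (inversions n w) + 2"
proof -
  have "card (inversions n w - simple_pairs m) \<le> card (inversions n w)"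
    by (rule card_mono[OF finite_inversions]) blast
  moreover have "card (simple_pairs m - inversions n w) \<le> 2"
    using card_mono[of "simple_pairs m" "simple_pairs m - inversions n w"] card_simple_pairs by force
  ultimately show ?thesis
    unfolding card_inversions_comp_tgen[OF assms] by linarith
qed

lemma card_inversions_comp_tgen_subset:
  assumes "2 \<le> n" "m < n" "simple_pairs m \<subseteq> inversions n w"
  shows "card (inversions n (w \<circ> tgen m)) + 2 = card (inversions n w)"
proof -
  have "card (inversions n w - simple_pairs m) + 2 = card (inversions n w)"
    using card_Diff_subset[OF finite_simple_pairs assms(3)] card_mono[OF finite_inversions assms(3)]
    by (simp add: card_simple_pairs)
  moreover have no_new: "simple_pairs m - inversions n w = {}"
    using assms(3) by blast
  ultimately show ?thesis
    unfolding card_inversions_comp_tgen[OF assms(1,2)] no_new by simp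
qed

lemma card_inversions_comp_tgen_disjoint:
  assumes "2 \<le> n" "m < n" "simple_pairs m \<inter> inversions n w = {}"
  shows "card (inversions n (w \<circ> tgen m)) = card (inversions n w) + 2"
proof -
  have "inversions n w - simple_pairs m = inversions n w" "simple_pairs m - inversions n w = simple_pairs m"
    using assms(3) by blast+
  then show ?thesis
    unfolding card_inversions_comp_tgen[OF assms(1,2)] by (simp add: card_simple_pairs)
qed

lemma less_if_no_simple_inversion:
  assumes "2 \<le> n" "m < n" "simple_pairs m \<inter> inversions n w = {}" "(x, y) \<in> simple_pairs m"
  shows "w y < w x"
proof -
  have "(x, y) \<in> root_pairs n"
    using assms(4) simple_pairs_subset_root_pairs[OF assms(1,2)] by blast
  moreover from this have "w x \<noteq> w y"
    by (auto simp: root_pairs_def)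
  ultimately show ?thesis
    using assms(3,4) by (auto simp: inversions_def simp del: apply_eq_iff)
qed

lemma eq_id_if_no_simple_inversion:
  assumes "2 \<le> n" and no_inversion: "\<And>m. m < n \<Longrightarrow> simple_pairs m \<inter> inversions n w = {}"
  shows "w = id"
proof -
  note less = less_if_no_simple_inversion[OF assms(1) _ no_inversion]
  have step: "w k < w (k + 1)" if "1 \<le> k" "k < int n" for k
    using less[of "nat k" "k + 1" k] that by (simp add: simple_pairs_def)
  have "w 1 < 0 \<or> 0 < w 1"
    by (cases "w 1" "0::int" rule: linorder_cases) simp_all
  moreover have "w (-1) < w 2"
    using less[of 0 2 "-1"] assms(1) by (simp add: simple_pairs_def)
  ultimately have w1: "1 \<le> \<bar>w 1\<bar>" "\<bar>w 1\<bar> < w 2"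
    using step[of 1] assms(1) uminus[of 1] by auto
  have fixed: "w k = k" if "2 \<le> k" "k \<le> int n" for k
  proof -
    have "w 2 + (k - 2) \<le> w k"
      using int_strict_mono_bound[of 2 "int n" w k] step that by simp
    moreover have "w k + (int n - k) \<le> w (int n)"
      using int_strict_mono_bound[of k "int n" w "int n"] step that by simp
    moreover have "w (int n) \<le> int n"
      using abs_le[of "int n"] by simp
    ultimately show ?thesis
      using w1 by linarith
  qed
  have "w 1 = 1"
  proof (rule ccontr)
    assume "w 1 \<noteq> 1"
    with w1 have "w 1 = -1"
      using fixed[of 2] assms(1) by (auto simp: abs_if split: if_splits)
    then show False
      using not_one_negative[of 1] fixed assms(1) by force
  qed
  then have "w k = k" if "1 \<le> k" "k \<le> int n" for k
    using fixed[of k] that by (cases "k = 1") simp_all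
  then show "w = id"
    by (rule eq_id_if_fixes_positive)
qed

end

lemma card_inversions_comp_word_prod_le:
  assumes "2 \<le> n" "ws \<in> words n" "even_signed_perm n w"
  shows "card (inversions n (w \<circ> word_prod ws)) \<le> card (inversions n w) + 2 * length ws"
  using assms(2)
proof (induction ws rule: rev_induct)
  case (snoc m ws)
  then have "m < n" "ws \<in> words n"
    by simp_all
  then have "card (inversions n (w \<circ> word_prod ws \<circ> tgen m))
               \<le> card (inversions n (w \<circ> word_prod ws)) + 2"
    using even_signed_perm_comp_word_prod[OF assms(1) _ assms(3)]
    by (intro even_signed_perm.card_inversions_comp_tgen_le[OF _ assms(1)])
  with snoc.IH[OF \<open>ws \<in> words n\<close>] show ?case
    by (simp add: word_prod_snoc comp_def)
qed simp

lemma exists_word_card_inversions: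
  assumes "2 \<le> n" "w \<in> Dn n"
  shows "\<exists>ws\<in>words n. word_prod ws = w \<and> 2 * length ws = card (inversions n w)"
  using assms(2)
proof (induction "card (inversions n w)" arbitrary: w rule: less_induct)
  case less
  interpret even_signed_perm n w
    using even_signed_perm_Dn[OF assms(1) less.prems] .
  show ?case
  proof (cases "\<exists>m<n. simple_pairs m \<inter> inversions n w \<noteq> {}")
    case False
    then have "w = id"
      using eq_id_if_no_simple_inversion[OF assms(1)] by blast
    then show ?thesis
      by (intro bexI[of _ "[]"]) auto
  next
    case True
    then obtain m where m: "m < n" "simple_pairs m \<subseteq> inversions n w"
      using simple_pairs_subset_or_disjoint by blast
    have card: "card (inversions n (w \<circ> tgen m)) + 2 = card (inversions n w)"
      by (rule card_inversions_comp_tgen_subset[OF assms(1) m])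
    obtain ws where ws: "ws \<in> words n" "word_prod ws = w \<circ> tgen m"
      "2 * length ws = card (inversions n (w \<circ> tgen m))"
      using less.hyps[OF _ comp_tgen_in_Dn[OF less.prems m(1)]] card by auto
    have "word_prod (ws @ [m]) = w"
      using ws(2) by (simp add: word_prod_snoc comp_assoc tgen_comp_tgen)
    then show ?thesis
      using ws m card by (intro bexI[of _ "ws @ [m]"]) auto
  qed
qed

lemma lenD_witness:
  assumes "w \<in> Dn n"
  obtains ws where "ws \<in> words n" "word_prod ws = w" "length ws = lenD n w"
proof -
  obtain ws where ws: "ws \<in> words n" "word_prod ws = w"
    using assms by (auto simp: Dn_def)
  have "\<exists>vs\<in>words n. word_prod vs = w \<and> length vs = lenD n w"
    unfolding lenD_def by (rule LeastI[where k = "length ws"]) (use ws in blast)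
  then show ?thesis
    using that by blast
qed

lemma reduced_words_nonempty:
  assumes "2 \<le> n" "w \<in> Dn n"
  shows "reduced_words n w \<noteq> {}"
proof -
  obtain ws where "ws \<in> words n" "word_prod ws = w" "length ws = lenD n w"
    using lenD_witness[OF assms(2)] .
  then show ?thesis
    by (auto simp: reduced_words_def)
qed

lemma double_lenD_eq_card_inversions:
  assumes "2 \<le> n" "w \<in> Dn n"
  shows "2 * lenD n w = card (inversions n w)"
proof -
  obtain ws where ws: "ws \<in> words n" "word_prod ws = w" "2 * length ws = card (inversions n w)"
    using exists_word_card_inversions[OF assms] by blast
  obtain vs where vs: "vs \<in> words n" "word_prod vs = w" "length vs = lenD n w"
    using lenD_witness[OF assms(2)] .
  have "lenD n w \<le> length ws"
    unfolding lenD_def using ws by (intro Least_le) auto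
  moreover have "card (inversions n w) \<le> 2 * length vs"
    using card_inversions_comp_word_prod_le[OF assms(1) vs(1) even_signed_perm_id] vs(2) by simp
  ultimately show ?thesis
    using ws(3) vs(3) by linarith
qed

section \<open>Blocks and the support\<close>

text \<open>On \<open>\<plusminus>1, \<dots>, \<plusminus>n\<close>, \<open>block i\<close> is constant exactly on the orbits of the subgroup
  generated by the \<open>t\<^sub>m\<close> with \<open>m \<noteq> i\<close>.\<close>

definition block :: "nat \<Rightarrow> int \<Rightarrow> int" where
  "block i x =
     (if i = 0 then (if 0 < x then 1 else 0)
      else if i = 1 then (if x = -1 \<or> 2 \<le> x then 1 else 0)
      else if \<bar>x\<bar> \<le> int i then 0 else if 0 < x then 1 else 2)"

definition separated_pairs :: "nat \<Rightarrow> nat \<Rightarrow> (int \<times> int) set" where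
  "separated_pairs n i = {(x, y) \<in> root_pairs n. block i x \<noteq> block i y}"

lemma block_tgen:
  assumes "m \<noteq> i"
  shows "block i (tgen m x) = block i x"
proof (cases "m = 0")
  case True
  with assms have "i \<noteq> 0"
    by simp
  then show ?thesis
    using True by (cases "x \<in> {1, 2, -1, -2}") (auto simp: tgen_0_apply block_def)
next
  case False
  with assms have "int i \<noteq> int m" "1 \<le> int m"
    by simp_all
  then show ?thesis
    using False
    by (cases "x \<in> {int m, int m + 1, - int m, - int m - 1}") (auto simp: tgen_apply block_def)
qed

lemma simple_pairs_disjoint_separated_pairs:
  assumes "m \<noteq> i"
  shows "simple_pairs m \<inter> separated_pairs n i = {}"
proof -
  have "block i x = block i y" if "(x, y) \<in> simple_pairs m" for x y
    using tgen_swap_simple_pair[OF that] block_tgen[OF assms, of x] by simp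
  then show ?thesis
    by (auto simp: separated_pairs_def)
qed

lemma simple_pairs_subset_separated_pairs:
  assumes "2 \<le> n" "i < n"
  shows "simple_pairs i \<subseteq> separated_pairs n i"
proof -
  have "block i x \<noteq> block i y" if "(x, y) \<in> simple_pairs i" for x y
    using that by (cases "i = 0") (auto simp: simple_pairs_def block_def)
  then show ?thesis
    using simple_pairs_subset_root_pairs[OF assms] by (auto simp: separated_pairs_def)
qed

lemma tgen_pair_separated_inversion:
  assumes "2 \<le> n" "m < n" "m \<noteq> i" "z \<in> inversions n w \<inter> separated_pairs n i"
  shows "tgen_pair m z \<in> inversions n (w \<circ> tgen m) \<inter> separated_pairs n i"
proof -
  obtain x y where z: "z = (x, y)"
    by (cases z)
  have "z \<in> root_pairs n - simple_pairs m"
    using assms(4) simple_pairs_disjoint_separated_pairs[OF assms(3), of n]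
    by (auto simp: inversions_def)
  then have "tgen_pair m z \<in> root_pairs n"
    using tgen_pair_nonsimple_root_pair[OF assms(1,2)] by blast
  then show ?thesis
    using assms(4) block_tgen[OF assms(3)]
    by (auto simp: z tgen_pair_def inversions_def separated_pairs_def)
qed

lemma separated_inversions_comp_tgen_empty_iff:
  assumes "2 \<le> n" "m < n" "m \<noteq> i"
  shows "inversions n (w \<circ> tgen m) \<inter> separated_pairs n i = {} \<longleftrightarrow>
           inversions n w \<inter> separated_pairs n i = {}"
proof
  assume "inversions n (w \<circ> tgen m) \<inter> separated_pairs n i = {}"
  then show "inversions n w \<inter> separated_pairs n i = {}"
    using tgen_pair_separated_inversion[OF assms, of _ w] by blast
next
  assume "inversions n w \<inter> separated_pairs n i = {}"
  then show "inversions n (w \<circ> tgen m) \<inter> separated_pairs n i = {}"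
    using tgen_pair_separated_inversion[OF assms, of _ "w \<circ> tgen m"]
    by (auto simp: comp_assoc tgen_comp_tgen)
qed

lemma separated_inversions_comp_word_prod_empty_iff:
  assumes "2 \<le> n" "ws \<in> words n" "i \<notin> set ws"
  shows "inversions n (w \<circ> word_prod ws) \<inter> separated_pairs n i = {} \<longleftrightarrow>
           inversions n w \<inter> separated_pairs n i = {}"
  using assms(2,3)
proof (induction ws rule: rev_induct)
  case (snoc m ws)
  then have "m < n" "m \<noteq> i" "ws \<in> words n" "i \<notin> set ws"
    by auto
  with snoc.IH show ?case
    using separated_inversions_comp_tgen_empty_iff[OF assms(1), of m i "w \<circ> word_prod ws"]
    by (simp add: word_prod_snoc comp_def)
qed simp

lemma no_separated_inversion_if_not_in_word:
  assumes "2 \<le> n" "ws \<in> words n" "i \<notin> set ws"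
  shows "inversions n (word_prod ws) \<inter> separated_pairs n i = {}"
  using separated_inversions_comp_word_prod_empty_iff[OF assms, of id] by simp

text \<open>In a reduced word, the last occurrence of \<open>t\<^sub>i\<close> must create the inversions of its
  simple pairs (otherwise the word could be shortened), and the letters after it keep a
  separated inversion.\<close>

lemma separated_inversion_if_in_reduced_word:
  assumes "2 \<le> n" "u \<in> Dn n" "ws \<in> reduced_words n u" "i \<in> set ws"
  shows "inversions n u \<inter> separated_pairs n i \<noteq> {}"
proof -
  obtain a b where ws: "ws = a @ i # b" "i \<notin> set b"
    using split_list_last[OF assms(4)] by blast
  have reduced: "ws \<in> words n" "word_prod ws = u" "length ws = lenD n u"
    using assms(3) by (auto simp: reduced_words_def)
  then have words: "a \<in> words n" "i < n" "b \<in> words n"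
    using ws(1) by auto
  define v where "v = word_prod a \<circ> tgen i"
  have u: "u = v \<circ> word_prod b"
    using reduced(2) ws(1) by (simp add: v_def word_prod_append word_prod_Cons comp_assoc)
  have esp_v: "even_signed_perm n v"
    unfolding v_def using assms(1) words by (intro even_signed_perm_comp_tgen even_signed_perm_word_prod)
  have "simple_pairs i \<subseteq> inversions n v"
  proof (rule ccontr)
    assume "\<not> simple_pairs i \<subseteq> inversions n v"
    then have "simple_pairs i \<inter> inversions n v = {}"
      using even_signed_perm.simple_pairs_subset_or_disjoint[OF esp_v] by blast
    from even_signed_perm.card_inversions_comp_tgen_disjoint[OF esp_v assms(1) words(2) this]
    have "card (inversions n (word_prod a)) = card (inversions n v) + 2"
      by (simp add: v_def comp_assoc tgen_comp_tgen)
    moreover have "card (inversions n (word_prod a)) \<le> 2 * length a"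
      using card_inversions_comp_word_prod_le[OF assms(1) words(1) even_signed_perm_id] by simp
    moreover have "card (inversions n u) \<le> card (inversions n v) + 2 * length b"
      unfolding u by (rule card_inversions_comp_word_prod_le[OF assms(1) words(3) esp_v])
    moreover have "card (inversions n u) = 2 * (length a + 1 + length b)"
      using double_lenD_eq_card_inversions[OF assms(1,2)] reduced(3) ws(1) by simp
    ultimately show False
      by simp
  qed
  moreover have "simple_pairs i \<noteq> {}"
    using card_simple_pairs[of i] by auto
  ultimately have "inversions n v \<inter> separated_pairs n i \<noteq> {}"
    using simple_pairs_subset_separated_pairs[OF assms(1) words(2)] by blast
  then show ?thesis
    unfolding u using separated_inversions_comp_word_prod_empty_iff[OF assms(1) words(3) ws(2)] by blast
qed

lemma cosupp_eq_no_separated_inversion: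
  assumes "2 \<le> n" "u \<in> Dn n"
  shows "cosupp n u = tgen ` {i. i < n \<and> inversions n u \<inter> separated_pairs n i = {}}"
proof -
  define S where "S = {i. \<exists>ws\<in>reduced_words n u. i \<in> set ws}"
  have S_iff: "i \<in> S \<longleftrightarrow> inversions n u \<inter> separated_pairs n i \<noteq> {}" if "i < n" for i
  proof
    assume "i \<in> S"
    then show "inversions n u \<inter> separated_pairs n i \<noteq> {}"
      using separated_inversion_if_in_reduced_word[OF assms] by (auto simp: S_def)
  next
    assume separated: "inversions n u \<inter> separated_pairs n i \<noteq> {}"
    obtain ws where "ws \<in> reduced_words n u"
      using reduced_words_nonempty[OF assms] by blast
    then show "i \<in> S"
      using no_separated_inversion_if_not_in_word[OF assms(1), of ws i] separated
      by (auto simp: S_def reduced_words_def)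
  qed
  have "supp n u = tgen ` S"
    by (auto simp: supp_def S_def)
  then have "cosupp n u = tgen ` ({0..<n} - S)"
    unfolding cosupp_def Gens_def by (simp add: image_set_diff[OF inj_tgen])
  moreover have "{0..<n} - S = {i. i < n \<and> inversions n u \<inter> separated_pairs n i = {}}"
    using S_iff by auto
  ultimately show ?thesis
    by simp
qed

section \<open>The criterion for each generator\<close>

definition suffix_dominates :: "nat \<Rightarrow> (int \<Rightarrow> int) \<Rightarrow> nat \<Rightarrow> bool" where
  "suffix_dominates n u i \<longleftrightarrow>
     (\<forall>j k :: int. 0 \<le> j \<and> j \<le> int i \<and> int i < k \<and> k \<le> int n
        \<longrightarrow> \<bar>(if j = 0 then 0 else u j)\<bar> < u k)"

definition block1 :: "nat \<Rightarrow> int set" where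
  "block1 n = insert (-1) {2..int n}"

lemma suffix_dominates_0_iff: "suffix_dominates n u 0 \<longleftrightarrow> (\<forall>k. 1 \<le> k \<and> k \<le> int n \<longrightarrow> 0 < u k)"
proof
  assume "suffix_dominates n u 0"
  then show "\<forall>k. 1 \<le> k \<and> k \<le> int n \<longrightarrow> 0 < u k"
    unfolding suffix_dominates_def by (auto dest: spec[of _ 0])
qed (auto simp: suffix_dominates_def)

lemma suffix_dominates_iff:
  assumes "1 \<le> i"
  shows "suffix_dominates n u i \<longleftrightarrow>
           (\<forall>j k. 1 \<le> j \<and> j \<le> int i \<and> int i < k \<and> k \<le> int n \<longrightarrow> \<bar>u j\<bar> < u k)"
    (is "_ \<longleftrightarrow> ?dominates")
proof
  assume dominates: "suffix_dominates n u i"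
  show ?dominates
  proof (intro allI impI)
    fix j k :: int
    assume "1 \<le> j \<and> j \<le> int i \<and> int i < k \<and> k \<le> int n"
    then show "\<bar>u j\<bar> < u k"
      using dominates[unfolded suffix_dominates_def, rule_format, of j k] by simp
  qed
next
  assume dominates: ?dominates
  show "suffix_dominates n u i"
    unfolding suffix_dominates_def
  proof (intro allI impI)
    fix j k :: int
    assume jk: "0 \<le> j \<and> j \<le> int i \<and> int i < k \<and> k \<le> int n"
    show "\<bar>(if j = 0 then 0 else u j)\<bar> < u k"
      using dominates[rule_format, of j k] dominates[rule_format, of 1 k] jk assms by auto
  qed
qed

lemma no_separated_inversion_iff:
  "inversions n w \<inter> separated_pairs n i = {} \<longleftrightarrow> (\<forall>x y. (x, y) \<in> separated_pairs n i \<longrightarrow> w y \<le> w x)"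
  unfolding inversions_def separated_pairs_def by (auto simp: not_less) (meson leD)

lemma mem_separated_pairs_1_iff:
  "(x, y) \<in> separated_pairs n 1 \<longleftrightarrow> x \<in> block1 n \<and> - y \<in> block1 n \<and> x \<noteq> - y"
  by (auto simp: separated_pairs_def root_pairs_def block_def block1_def)

context even_signed_perm
begin

lemma no_separated_inversion_0_iff:
  "inversions n w \<inter> separated_pairs n 0 = {} \<longleftrightarrow> (\<forall>k. 1 \<le> k \<and> k \<le> int n \<longrightarrow> 0 < w k)"
proof
  assume no_inversion: "inversions n w \<inter> separated_pairs n 0 = {}"
  show "\<forall>k. 1 \<le> k \<and> k \<le> int n \<longrightarrow> 0 < w k"
  proof (intro allI impI; rule ccontr)
    fix k
    assume k: "1 \<le> k \<and> k \<le> int n" "\<not> 0 < w k"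
    then have negative: "w k < 0"
      by (cases "w k" "0::int" rule: linorder_cases) simp_all
    have "0 < w l" if "1 \<le> l" "l \<le> int n" "l \<noteq> k" for l
    proof -
      have "(l, - k) \<in> separated_pairs n 0"
        using that k by (auto simp: separated_pairs_def root_pairs_def block_def)
      then have "w (- k) \<le> w l"
        using no_inversion by (auto simp: no_separated_inversion_iff)
      then show ?thesis
        using negative uminus[of k] by simp
    qed
    then show False
      using not_one_negative[of k] k negative by blast
  qed
next
  assume positive: "\<forall>k. 1 \<le> k \<and> k \<le> int n \<longrightarrow> 0 < w k"
  show "inversions n w \<inter> separated_pairs n 0 = {}"
    unfolding no_separated_inversion_iff
  proof (intro allI impI)
    fix x y
    assume "(x, y) \<in> separated_pairs n 0"
    then have "1 \<le> x" "x \<le> int n" "1 \<le> - y" "- y \<le> int n"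
      by (auto simp: separated_pairs_def root_pairs_def block_def split: if_splits)
    then have "0 < w x" "0 < w (- y)"
      using positive by simp_all
    then show "w y \<le> w x"
      using uminus[of y] by simp
  qed
qed

lemma dominates_if_no_separated_inversion:
  assumes "2 \<le> i" "inversions n w \<inter> separated_pairs n i = {}"
    and jk: "1 \<le> j" "j \<le> int i" "int i < k" "k \<le> int n"
  shows "\<bar>w j\<bar> < w k"
proof -
  have "(k, j) \<in> separated_pairs n i" "(k, - j) \<in> separated_pairs n i"
    using assms(1) jk by (auto simp: separated_pairs_def root_pairs_def block_def)
  then have "w j \<le> w k" "w (- j) \<le> w k"
    using assms(2) by (auto simp: no_separated_inversion_iff)
  then have "w j < w k" "w (- j) < w k"
    using jk by (auto simp: less_le)
  then show ?thesis
    using uminus[of j] by simp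
qed

lemma no_separated_inversion_if_dominates:
  assumes "2 \<le> i"
    and dominates: "\<And>j k. 1 \<le> j \<Longrightarrow> j \<le> int i \<Longrightarrow> int i < k \<Longrightarrow> k \<le> int n \<Longrightarrow> \<bar>w j\<bar> < w k"
  shows "inversions n w \<inter> separated_pairs n i = {}"
  unfolding no_separated_inversion_iff
proof (intro allI impI)
  have dominated: "\<bar>w j\<bar> < w k" if "0 < \<bar>j\<bar>" "\<bar>j\<bar> \<le> int i" "int i < k" "k \<le> int n" for j k
    using dominates[of "\<bar>j\<bar>" k] that uminus[of j] by (cases "0 < j") auto
  fix x y
  assume "(x, y) \<in> separated_pairs n i"
  then have xy: "0 < \<bar>x\<bar>" "\<bar>x\<bar> \<le> int n" "0 < \<bar>y\<bar>" "\<bar>y\<bar> \<le> int n" "y < x" "block i x \<noteq> block i y"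
    by (auto simp: separated_pairs_def root_pairs_def)
  consider "\<bar>x\<bar> \<le> int i" "y < - int i" | "int i < x" "\<bar>y\<bar> \<le> int i" | "int i < x" "y < - int i"
    using xy assms(1) by (auto simp: block_def split: if_splits)
  then show "w y \<le> w x"
  proof cases
    case 1
    then show ?thesis
      using dominated[of x "- y"] xy uminus[of y] by simp
  next
    case 2
    then show ?thesis
      using dominated[of y x] xy by simp
  next
    case 3
    then show ?thesis
      using dominated[of 1 x] dominated[of 1 "- y"] xy assms(1) uminus[of y] by simp
  qed
qed

lemma no_separated_inversion_iff_suffix_dominates:
  assumes "i \<noteq> 1"
  shows "inversions n w \<inter> separated_pairs n i = {} \<longleftrightarrow> suffix_dominates n w i"
proof (cases "i = 0")
  case True
  then show ?thesis
    by (simp add: no_separated_inversion_0_iff suffix_dominates_0_iff)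
next
  case False
  with assms have "2 \<le> i"
    by simp
  then show ?thesis
    unfolding suffix_dominates_iff[OF order_trans[OF one_le_numeral \<open>2 \<le> i\<close>]]
    using dominates_if_no_separated_inversion[OF \<open>2 \<le> i\<close>]
      no_separated_inversion_if_dominates[OF \<open>2 \<le> i\<close>]
    by blast
qed

lemma no_separated_inversion_1_iff_sums:
  "inversions n w \<inter> separated_pairs n 1 = {} \<longleftrightarrow>
     (\<forall>x\<in>block1 n. \<forall>y\<in>block1 n. x \<noteq> y \<longrightarrow> 0 < w x + w y)"
proof -
  have "w (- y) \<le> w x \<longleftrightarrow> 0 < w x + w y" if "x \<in> block1 n" "y \<in> block1 n" for x y
  proof -
    have "x \<noteq> - y"
      using that by (auto simp: block1_def)
    then have "w x \<noteq> - w y"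
      by (metis uminus apply_eq_iff)
    then show ?thesis
      using uminus[of y] by auto
  qed
  moreover have "(\<forall>x y. x \<in> block1 n \<and> - y \<in> block1 n \<and> x \<noteq> - y \<longrightarrow> w y \<le> w x) \<longleftrightarrow>
                 (\<forall>x\<in>block1 n. \<forall>y\<in>block1 n. x \<noteq> y \<longrightarrow> w (- y) \<le> w x)"
    by (metis minus_minus)
  ultimately show ?thesis
    unfolding no_separated_inversion_iff mem_separated_pairs_1_iff by auto
qed

lemma two_le_apply:
  assumes "0 \<le> w x" "x \<noteq> 0" "w z = 1" "x \<noteq> z"
  shows "2 \<le> w x"
proof -
  have "w x \<noteq> 0" "w x \<noteq> 1"
    using assms(2-4) apply_eq_iff[of x z] by auto
  then show ?thesis
    using assms(1) by linarith
qed

lemma minus_one_on_block1_if_sums: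
  assumes "2 \<le> n" and sums: "\<forall>x\<in>block1 n. \<forall>y\<in>block1 n. x \<noteq> y \<longrightarrow> 0 < w x + w y"
  shows "\<exists>c\<in>block1 n. w c = -1 \<and> (\<forall>x\<in>block1 n - {c}. 2 \<le> w x)"
proof -
  obtain z where z: "w z = 1" "0 < \<bar>z\<bar>" "\<bar>z\<bar> \<le> int n"
    using obtain_preimage[of 1] assms by auto
  define c where "c = (if z \<in> block1 n then z else - z)"
  have c: "c \<in> block1 n" "\<bar>w c\<bar> = 1"
    using z uminus[of z] by (auto simp: c_def block1_def)
  have others: "- w c < w x" if "x \<in> block1 n - {c}" for x
    using sums[rule_format, of x c] c(1) that by auto
  show ?thesis
  proof (cases "w c = -1")
    case True
    then show ?thesis
      using c(1) others by fastforce
  next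
    case False
    then have "w c = 1"
      using c(2) by auto
    have positive: "0 < w x" if "x \<in> block1 n" for x
    proof (cases "x = c")
      case False
      have "x \<noteq> 0"
        using that by (auto simp: block1_def)
      then show ?thesis
        using others[of x] that False \<open>w c = 1\<close>
        by (cases "w x" "0::int" rule: linorder_cases) simp_all
    qed (simp add: \<open>w c = 1\<close>)
    have "w 1 < 0"
      using positive[of "-1"] uminus[of 1] by (simp add: block1_def)
    moreover have "0 < w l" if "1 \<le> l" "l \<le> int n" "l \<noteq> 1" for l
      using positive[of l] that by (simp add: block1_def)
    ultimately show ?thesis
      using not_one_negative[of 1] assms(1) by simp
  qed
qed

lemma sums_if_minus_one_on_block1:
  assumes "c \<in> block1 n" "w c = -1" and others: "\<And>x. x \<in> block1 n - {c} \<Longrightarrow> 2 \<le> w x"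
  shows "\<forall>x\<in>block1 n. \<forall>y\<in>block1 n. x \<noteq> y \<longrightarrow> 0 < w x + w y"
proof (intro ballI impI)
  fix x y
  assume "x \<in> block1 n" "y \<in> block1 n" "x \<noteq> y"
  then show "0 < w x + w y"
    using assms(2) others[of x] others[of y] by (cases "x = c"; cases "y = c") simp_all
qed

lemma cases_if_minus_one_on_block1:
  assumes "2 \<le> n" "c \<in> block1 n" "w c = -1" and others: "\<And>x. x \<in> block1 n - {c} \<Longrightarrow> 2 \<le> w x"
  shows "(w 1 = 1 \<and> (\<forall>k. 1 \<le> k \<and> k \<le> int n \<longrightarrow> 0 < w k)) \<or>
         (w 1 < -1 \<and> inv w 1 < -1 \<and> card {i. 1 \<le> i \<and> i \<le> int n \<and> w i < 0} = 2)"
proof (cases "c = -1")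
  case True
  then have "w 1 = 1"
    using assms(3) uminus[of 1] by simp
  moreover have "0 < w k" if "1 \<le> k" "k \<le> int n" for k
    using others[of k] that True \<open>w 1 = 1\<close> by (cases "k = 1") (auto simp: block1_def)
  ultimately show ?thesis
    by blast
next
  case False
  then have c: "2 \<le> c" "c \<le> int n"
    using assms(2) by (auto simp: block1_def)
  have "w 1 < -1"
    using others[of "-1"] False uminus[of 1] by (simp add: block1_def)
  moreover have "inv w 1 = - c"
    using assms(3) uminus[of c] by (simp add: inv_f_eq[OF inj])
  moreover have "{i. 1 \<le> i \<and> i \<le> int n \<and> w i < 0} = {1, c}"
  proof (intro set_eqI iffI)
    fix i
    assume "i \<in> {i. 1 \<le> i \<and> i \<le> int n \<and> w i < 0}"
    then show "i \<in> {1, c}"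
      using others[of i] by (cases "i = 1") (auto simp: block1_def)
  qed (use assms(1,3) c \<open>w 1 < -1\<close> in auto)
  ultimately show ?thesis
    using c by simp
qed

lemma minus_one_on_block1_if_fixes_1:
  assumes "w 1 = 1" and positive: "\<And>k. 1 \<le> k \<Longrightarrow> k \<le> int n \<Longrightarrow> 0 < w k"
  shows "\<exists>c\<in>block1 n. w c = -1 \<and> (\<forall>x\<in>block1 n - {c}. 2 \<le> w x)"
proof -
  have "2 \<le> w x" if "x \<in> block1 n - {-1}" for x
  proof -
    have "2 \<le> x" "x \<le> int n"
      using that by (auto simp: block1_def)
    then show ?thesis
      using two_le_apply[of x 1] positive[of x] assms(1) by simp
  qed
  moreover have "w (-1) = -1"
    using assms(1) uminus[of 1] by simp
  ultimately show ?thesis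
    by (auto simp: block1_def)
qed

lemma minus_one_on_block1_if_two_negatives:
  assumes "w 1 < -1" "inv w 1 < -1" "card {i. 1 \<le> i \<and> i \<le> int n \<and> w i < 0} = 2"
  shows "\<exists>c\<in>block1 n. w c = -1 \<and> (\<forall>x\<in>block1 n - {c}. 2 \<le> w x)"
proof -
  define c where "c = - inv w 1"
  have "w (- c) = 1"
    using surj_f_inv_f[OF bij_is_surj[OF bij]] by (simp add: c_def)
  then have wc: "w c = -1"
    using uminus[of c] by simp
  have c: "2 \<le> c" "c \<le> int n"
    using assms(2) \<open>w (- c) = 1\<close> outside[of "- c"] by (force simp: c_def)+
  let ?N = "{i. 1 \<le> i \<and> i \<le> int n \<and> w i < 0}"
  have negatives: "{1, c} = ?N"
  proof (rule card_subset_eq)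
    show "finite ?N"
      by (rule finite_subset[of _ "{1..int n}"]) auto
    show "{1, c} \<subseteq> ?N"
      using assms(1) wc c by auto
    show "card {1, c} = card ?N"
      using assms(3) c by simp
  qed
  have "2 \<le> w x" if "x \<in> block1 n - {c}" for x
  proof (cases "x = -1")
    case True
    then show ?thesis
      using assms(1) uminus[of 1] by simp
  next
    case False
    with that have x: "2 \<le> x" "x \<le> int n" "x \<noteq> c"
      by (auto simp: block1_def)
    then have "x \<notin> ?N"
      unfolding negatives[symmetric] by simp
    then show ?thesis
      using two_le_apply[of x "- c"] x c \<open>w (- c) = 1\<close> by simp
  qed
  moreover have "c \<in> block1 n"
    using c by (simp add: block1_def)
  ultimately show ?thesis
    using wc by blast
qed

lemma no_separated_inversion_1_iff:
  assumes "2 \<le> n"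
  shows "inversions n w \<inter> separated_pairs n 1 = {} \<longleftrightarrow>
           (w 1 = 1 \<and> (\<forall>k. 1 \<le> k \<and> k \<le> int n \<longrightarrow> 0 < w k)) \<or>
           (w 1 < -1 \<and> inv w 1 < -1 \<and> card {i. 1 \<le> i \<and> i \<le> int n \<and> w i < 0} = 2)"
  unfolding no_separated_inversion_1_iff_sums
  using minus_one_on_block1_if_sums[OF assms] sums_if_minus_one_on_block1
    cases_if_minus_one_on_block1[OF assms] minus_one_on_block1_if_fixes_1
    minus_one_on_block1_if_two_negatives
  by meson

end

theorem mainTheorem16:
  fixes n :: nat and u :: "int \<Rightarrow> int"
  assumes "n \<ge> 2" and "u \<in> Dn n"
  defines "T \<equiv> {tgen i | i. i < n \<and> i \<noteq> 1 \<and>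
             (\<forall>j k :: int. 0 \<le> j \<and> j \<le> int i \<and> int i < k \<and> k \<le> int n
                 \<longrightarrow> \<bar>(if j = 0 then 0 else u j)\<bar> < u k)}"
  shows "((u 1 = 1 \<and> (\<forall>k::int. 1 \<le> k \<and> k \<le> int n \<longrightarrow> u k > 0)) \<or>
          (u 1 < -1 \<and> inv u 1 < -1 \<and> card {i::int. 1 \<le> i \<and> i \<le> int n \<and> u i < 0} = 2)
          \<longrightarrow> cosupp n u = {tgen 1} \<union> T)
       \<and> (\<not> ((u 1 = 1 \<and> (\<forall>k::int. 1 \<le> k \<and> k \<le> int n \<longrightarrow> u k > 0)) \<or>
          (u 1 < -1 \<and> inv u 1 < -1 \<and> card {i::int. 1 \<le> i \<and> i \<le> int n \<and> u i < 0} = 2))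
          \<longrightarrow> cosupp n u = T)"
proof -
  interpret even_signed_perm n u
    using even_signed_perm_Dn[OF assms(1,2)] .
  let ?free = "\<lambda>i. inversions n u \<inter> separated_pairs n i = {}"
  have "cosupp n u = tgen ` {i. i < n \<and> ?free i}"
    by (rule cosupp_eq_no_separated_inversion[OF assms(1,2)])
  also have "{i. i < n \<and> ?free i} = (if ?free 1 then {1} else {}) \<union> {i. i < n \<and> i \<noteq> 1 \<and> ?free i}"
    using assms(1) by auto
  also have "{i. i < n \<and> i \<noteq> 1 \<and> ?free i} = {i. i < n \<and> i \<noteq> 1 \<and> suffix_dominates n u i}"
    using no_separated_inversion_iff_suffix_dominates by blast
  finally have "cosupp n u = (if ?free 1 then {tgen 1} else {}) \<union> T"
    unfolding T_def suffix_dominates_def by auto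
  then show ?thesis
    using no_separated_inversion_1_iff[OF assms(1)] by auto
qed

end
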